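(* For any fixed $m$, any fixed $k<m$ and any fixed $\vec p\in(0,1)^m$, $$\Pr_{P\sim(\pi_{\vec p})^n}\big(\mathrm{top}_k(\vec p)\subseteq\mathrm{CORE}(P)\big)=1-\exp(-\Omega(n)).$$
   Context: $\mathcal A=[m]$, $\mathcal A_k$ the $k$-subsets. Approval profile $P=(A_1,\dots,A_n)$, $A_j\subseteq\mathcal A$, drawn i.i.d. from $\pi_{\vec p}$, where $\Pr_{\pi_{\vec p}}(A)=\prod_{i\in A}p_i\prod_{i\notin A}(1-p_i)$. $\mathrm{top}_k(\vec p)$ is the set of $W\in\mathcal A_k$ with $p_i\ge p_j$ for all $i\in W$, $j\notin W$. $W\in\mathcal A_k$ is in $\mathrm{CORE}(P)$ iff for every nonempty set of voters $N'\subseteq[n]$ and every $W'\subseteq\mathcal A$ with $|W'|/k\le|N'|/n$ there is $j\in N'$ with $|A_j\cap W'|\le|A_j\cap W|$. Asymptotics as $n\to\infty$. *)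

theory Defs
  imports "HOL-Probability.Probability"
begin

text \<open>Alternatives are 0..<m, voters are 0..<n. An approval profile is a map
  from voters to approval sets.\<close>

definition approval_pmf :: "nat \<Rightarrow> (nat \<Rightarrow> real) \<Rightarrow> nat set pmf" where
  "approval_pmf m p =
     map_pmf (\<lambda>f. {i \<in> {..<m}. f i}) (Pi_pmf {..<m} False (\<lambda>i. bernoulli_pmf (p i)))"

definition profile_pmf :: "nat \<Rightarrow> nat \<Rightarrow> (nat \<Rightarrow> real) \<Rightarrow> (nat \<Rightarrow> nat set) pmf" where
  "profile_pmf n m p = Pi_pmf {..<n} {} (\<lambda>_. approval_pmf m p)"

definition top_k :: "nat \<Rightarrow> nat \<Rightarrow> (nat \<Rightarrow> real) \<Rightarrow> nat set set" where
  "top_k m k p = {W. W \<subseteq> {..<m} \<and> card W = k \<and>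
                   (\<forall>i\<in>W. \<forall>j\<in>{..<m} - W. p i \<ge> p j)}"

definition in_core :: "nat \<Rightarrow> nat \<Rightarrow> nat \<Rightarrow> (nat \<Rightarrow> nat set) \<Rightarrow> nat set \<Rightarrow> bool" where
  "in_core m k n P W \<longleftrightarrow> W \<subseteq> {..<m} \<and> card W = k \<and>
     (\<forall>N'. N' \<subseteq> {..<n} \<longrightarrow> N' \<noteq> {} \<longrightarrow>
       (\<forall>W'. W' \<subseteq> {..<m} \<longrightarrow> real (card W') / real k \<le> real (card N') / real n \<longrightarrow>
          (\<exists>j\<in>N'. card (P j \<inter> W') \<le> card (P j \<inter> W))))"

end

theory Submission
  imports Defs
begin

text \<open>Fix a top-\<open>k\<close> committee \<open>W\<close> and a deviation \<open>W'\<close> with \<open>|W'| \<le> k\<close>. A voter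
  strictly prefers \<open>W'\<close> iff her approvals in \<open>X = W' - W\<close> outnumber those in
  \<open>Y = W - W'\<close>. Every alternative of \<open>Y\<close> is approved at least as likely as every one of
  \<open>X\<close>, and \<open>|Y| \<ge> |X|\<close>, so \<open>Y\<close> contains \<open>r = |Y| div |X|\<close> disjoint copies of \<open>X\<close>, each with
  a stochastically larger approval count. The count on \<open>X\<close> beats \<open>r\<close> independent such
  counts with probability at most \<open>1 / (r + 1) < |X| / |Y| \<le> |W'| / k\<close>. Hence the expected
  fraction of voters preferring \<open>W'\<close> is strictly below the fraction \<open>|W'| / k\<close> needed to
  block \<open>W\<close>, Hoeffding's inequality makes blocking exponentially unlikely, and a union
  bound over the finitely many pairs \<open>(W, W')\<close> concludes.\<close>

section \<open>Events determined by disjoint blocks of coordinates\<close>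

definition depends_only_on :: "(('a \<Rightarrow> 'b) \<Rightarrow> bool) \<Rightarrow> 'a set \<Rightarrow> bool" where
  "depends_only_on Q S \<longleftrightarrow> (\<forall>f g. (\<forall>x\<in>S. f x = g x) \<longrightarrow> Q f = Q g)"

lemma depends_only_onD:
  "depends_only_on Q S \<Longrightarrow> (\<And>x. x \<in> S \<Longrightarrow> f x = g x) \<Longrightarrow> Q f = Q g"
  unfolding depends_only_on_def by blast

lemma depends_only_on_mono:
  "depends_only_on Q S \<Longrightarrow> S \<subseteq> T \<Longrightarrow> depends_only_on Q T"
  unfolding depends_only_on_def by blast

lemma depends_only_on_all:
  "(\<And>i. i < r \<Longrightarrow> depends_only_on (Q i) S) \<Longrightarrow> depends_only_on (\<lambda>f. \<forall>i<r. Q i f) S"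
  unfolding depends_only_on_def by blast

lemma depends_only_on_UN:
  assumes "\<And>i. i < r \<Longrightarrow> depends_only_on (Q i) (Z i)"
  shows "depends_only_on (\<lambda>f. \<forall>i<r. Q i f) (\<Union>i<r. Z i)"
proof (rule depends_only_on_all)
  fix i assume "i < r"
  then have "depends_only_on (Q i) (Z i)"
    by (rule assms)
  then show "depends_only_on (Q i) (\<Union>i<r. Z i)"
    by (rule depends_only_on_mono) (use \<open>i < r\<close> in auto)
qed

text \<open>Unlike \<open>measure_pmf_prob_product\<close>, this needs no countability: only the supports matter.\<close>
lemma measure_pair_pmf_Times:
  "measure_pmf.prob (pair_pmf M N) (A \<times> B) = measure_pmf.prob M A * measure_pmf.prob N B"
proof -
  have "(A \<times> B) \<inter> set_pmf (pair_pmf M N) = (A \<inter> set_pmf M) \<times> (B \<inter> set_pmf N)"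
    by auto
  then have "measure_pmf.prob (pair_pmf M N) (A \<times> B) =
        measure_pmf.prob (pair_pmf M N) ((A \<inter> set_pmf M) \<times> (B \<inter> set_pmf N))"
    by (metis measure_Int_set_pmf)
  also have "\<dots> = measure_pmf.prob M (A \<inter> set_pmf M) * measure_pmf.prob N (B \<inter> set_pmf N)"
    by (rule measure_pmf_prob_product) auto
  finally show ?thesis
    by (simp add: measure_Int_set_pmf)
qed

lemma prob_Pi_pmf_conj_disjoint:
  assumes "finite S" "finite T" "S \<inter> T = {}"
    and Q1: "depends_only_on Q1 S" and Q2: "depends_only_on Q2 T"
  shows "measure_pmf.prob (Pi_pmf (S \<union> T) d M) {f. Q1 f \<and> Q2 f} =
         measure_pmf.prob (Pi_pmf S d M) {f. Q1 f} * measure_pmf.prob (Pi_pmf T d M) {f. Q2 f}"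
proof -
  let ?merge = "\<lambda>(f, g) x. if x \<in> S then f x else g x"
  have "measure_pmf.prob (Pi_pmf (S \<union> T) d M) {f. Q1 f \<and> Q2 f} =
      measure_pmf.prob (pair_pmf (Pi_pmf S d M) (Pi_pmf T d M)) (?merge -` {f. Q1 f \<and> Q2 f})"
    using assms(1-3) by (subst Pi_pmf_union) auto
  also have "?merge -` {f. Q1 f \<and> Q2 f} = {f. Q1 f} \<times> {g. Q2 g}"
  proof -
    have "Q1 (?merge (f, g)) = Q1 f" for f g
      by (rule depends_only_onD[OF Q1]) simp
    moreover have "Q2 (?merge (f, g)) = Q2 g" for f g
      using \<open>S \<inter> T = {}\<close> by (intro depends_only_onD[OF Q2]) auto
    ultimately show ?thesis
      by auto
  qed
  finally show ?thesis
    by (simp add: measure_pair_pmf_Times)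
qed

lemma prob_Pi_pmf_subset:
  assumes "finite S" "S' \<subseteq> S" and Q: "depends_only_on Q S'"
  shows "measure_pmf.prob (Pi_pmf S d M) {f. Q f} = measure_pmf.prob (Pi_pmf S' d M) {f. Q f}"
proof -
  have "Q (\<lambda>x. if x \<in> S' then f x else d) = Q f" for f
    by (rule depends_only_onD[OF Q]) simp
  then have "(\<lambda>f x. if x \<in> S' then f x else d) -` {f. Q f} = {f. Q f}"
    by auto
  then show ?thesis
    using assms(1,2) by (subst Pi_pmf_subset[of S S']) auto
qed

lemma prob_Pi_pmf_all_blocks:
  fixes r :: nat
  assumes "\<And>i. i < r \<Longrightarrow> finite (Z i)"
    and "\<And>i j. i < r \<Longrightarrow> j < r \<Longrightarrow> i \<noteq> j \<Longrightarrow> Z i \<inter> Z j = {}"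
    and "\<And>i. i < r \<Longrightarrow> depends_only_on (Q i) (Z i)"
  shows "measure_pmf.prob (Pi_pmf (\<Union>i<r. Z i) d M) {f. \<forall>i<r. Q i f} =
         (\<Prod>i<r. measure_pmf.prob (Pi_pmf (Z i) d M) {f. Q i f})"
  using assms
proof (induction r)
  case 0
  then show ?case by simp
next
  case (Suc r)
  have IH: "measure_pmf.prob (Pi_pmf (\<Union>i<r. Z i) d M) {f. \<forall>i<r. Q i f} =
      (\<Prod>i<r. measure_pmf.prob (Pi_pmf (Z i) d M) {f. Q i f})"
    using Suc.prems by (intro Suc.IH) auto
  have "depends_only_on (\<lambda>f. \<forall>i<r. Q i f) (\<Union>i<r. Z i)"
    by (rule depends_only_on_UN) (use Suc.prems(3) in auto)
  moreover have "(\<Union>i<r. Z i) \<inter> Z r = {}"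
  proof (intro equalityI subsetI)
    fix x assume "x \<in> (\<Union>i<r. Z i) \<inter> Z r"
    then obtain i where "i < r" "x \<in> Z i \<inter> Z r"
      by blast
    with Suc.prems(2)[of i r] show "x \<in> {}"
      by simp
  qed simp
  ultimately have "measure_pmf.prob (Pi_pmf ((\<Union>i<r. Z i) \<union> Z r) d M) {f. (\<forall>i<r. Q i f) \<and> Q r f} =
      measure_pmf.prob (Pi_pmf (\<Union>i<r. Z i) d M) {f. \<forall>i<r. Q i f} *
      measure_pmf.prob (Pi_pmf (Z r) d M) {f. Q r f}"
    using Suc.prems(1,3) by (intro prob_Pi_pmf_conj_disjoint) auto
  moreover have "(\<Union>i<Suc r. Z i) = (\<Union>i<r. Z i) \<union> Z r"
    by (auto simp: lessThan_Suc)
  moreover have "{f. \<forall>i<Suc r. Q i f} = {f. (\<forall>i<r. Q i f) \<and> Q r f}"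
    by (auto simp: less_Suc_eq)
  ultimately show ?case
    using IH by simp
qed

lemma prob_Pi_pmf_conj_all_blocks:
  fixes r :: nat
  assumes "finite X" "\<And>i. i < r \<Longrightarrow> finite (Z i)" "\<And>i. i < r \<Longrightarrow> X \<inter> Z i = {}"
    and "\<And>i j. i < r \<Longrightarrow> j < r \<Longrightarrow> i \<noteq> j \<Longrightarrow> Z i \<inter> Z j = {}"
    and "depends_only_on Q0 X" "\<And>i. i < r \<Longrightarrow> depends_only_on (Q i) (Z i)"
  shows "measure_pmf.prob (Pi_pmf (X \<union> (\<Union>i<r. Z i)) d M) {f. Q0 f \<and> (\<forall>i<r. Q i f)} =
         measure_pmf.prob (Pi_pmf X d M) {f. Q0 f} *
         (\<Prod>i<r. measure_pmf.prob (Pi_pmf (Z i) d M) {f. Q i f})"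
proof -
  have "depends_only_on (\<lambda>f. \<forall>i<r. Q i f) (\<Union>i<r. Z i)"
    using assms(6) by (rule depends_only_on_UN)
  then have "measure_pmf.prob (Pi_pmf (X \<union> (\<Union>i<r. Z i)) d M) {f. Q0 f \<and> (\<forall>i<r. Q i f)} =
      measure_pmf.prob (Pi_pmf X d M) {f. Q0 f} *
      measure_pmf.prob (Pi_pmf (\<Union>i<r. Z i) d M) {f. \<forall>i<r. Q i f}"
    using assms(1-3,5) by (intro prob_Pi_pmf_conj_disjoint) auto
  also have "measure_pmf.prob (Pi_pmf (\<Union>i<r. Z i) d M) {f. \<forall>i<r. Q i f} =
      (\<Prod>i<r. measure_pmf.prob (Pi_pmf (Z i) d M) {f. Q i f})"
    using assms(2,4,6) by (rule prob_Pi_pmf_all_blocks)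
  finally show ?thesis .
qed

lemma measure_pmf_le_sum_values:
  fixes g :: "'a \<Rightarrow> nat"
  assumes "\<And>x. g x \<le> N"
  shows "measure_pmf.prob M {x. P x (g x)} \<le> (\<Sum>u\<le>N. measure_pmf.prob M {x. g x = u \<and> P x u})"
proof -
  have "measure_pmf.prob M {x. P x (g x)} \<le> measure_pmf.prob M (\<Union>u\<le>N. {x. g x = u \<and> P x u})"
    using assms by (intro measure_pmf.finite_measure_mono) auto
  also have "\<dots> \<le> (\<Sum>u\<le>N. measure_pmf.prob M {x. g x = u \<and> P x u})"
    by (rule measure_pmf.finite_measure_subadditive_finite) auto
  finally show ?thesis .
qed

section \<open>Counting successes of independent Bernoulli trials\<close>

abbreviation bernoulli_family :: "('a \<Rightarrow> real) \<Rightarrow> 'a set \<Rightarrow> ('a \<Rightarrow> bool) pmf" where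
  "bernoulli_family p S \<equiv> Pi_pmf S False (\<lambda>i. bernoulli_pmf (p i))"

definition num_true :: "'a set \<Rightarrow> ('a \<Rightarrow> bool) \<Rightarrow> nat" where
  "num_true S f = card {i \<in> S. f i}"

lemma num_true_cong: "(\<And>x. x \<in> S \<Longrightarrow> f x = g x) \<Longrightarrow> num_true S f = num_true S g"
  unfolding num_true_def by (rule arg_cong[where f = card]) auto

lemma depends_only_on_num_true: "T \<subseteq> S \<Longrightarrow> depends_only_on (\<lambda>f. P (num_true T f)) S"
  unfolding depends_only_on_def using num_true_cong by (metis subsetD)

lemma depends_only_on_num_true_less:
  "T \<subseteq> S \<Longrightarrow> T' \<subseteq> S \<Longrightarrow> depends_only_on (\<lambda>f. num_true T f < num_true T' f) S"
  unfolding depends_only_on_def using num_true_cong by (metis subsetD)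

lemma num_true_le_card: "finite S \<Longrightarrow> num_true S f \<le> card S"
  unfolding num_true_def by (intro card_mono) auto

lemma num_true_mono: "finite S \<Longrightarrow> T \<subseteq> S \<Longrightarrow> num_true T f \<le> num_true S f"
  unfolding num_true_def by (intro card_mono) auto

lemma num_true_insert_upd:
  assumes "finite S" "x \<notin> S"
  shows "num_true (insert x S) (f(x := b)) = (if b then 1 else 0) + num_true S f"
proof -
  have "{i \<in> insert x S. (f(x := b)) i} = (if b then {x} else {}) \<union> {i \<in> S. f i}"
    using assms by auto
  then show ?thesis
    unfolding num_true_def using assms by (auto simp: card_insert_if)
qed

lemma num_true_Int_Diff:
  assumes "finite S"
  shows "num_true S f = num_true (S \<inter> T) f + num_true (S - T) f"
proof -
  have "{i \<in> S. f i} = {i \<in> S \<inter> T. f i} \<union> {i \<in> S - T. f i}"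
    by auto
  then show ?thesis
    unfolding num_true_def using assms by (simp add: card_Un_disjoint disjoint_iff)
qed

lemma prob_num_true_eq_conv_less:
  "measure_pmf.prob M {f. num_true S f = u} =
   measure_pmf.prob M {f. num_true S f < Suc u} - measure_pmf.prob M {f. num_true S f < u}"
proof -
  have "{f. num_true S f < Suc u} = {f. num_true S f < u} \<union> {f. num_true S f = u}"
    by auto
  then show ?thesis
    by (simp add: measure_pmf.finite_measure_Union disjoint_iff)
qed

lemma prob_num_true_insert_less:
  assumes "finite S" "x \<notin> S" "0 \<le> p x" "p x \<le> 1"
  shows "measure_pmf.prob (bernoulli_family p (insert x S)) {f. num_true (insert x S) f < u} =
    p x * measure_pmf.prob (bernoulli_family p S) {f. num_true S f < u - 1} +
    (1 - p x) * measure_pmf.prob (bernoulli_family p S) {f. num_true S f < u}"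
proof -
  let ?M = "pair_pmf (bernoulli_pmf (p x)) (bernoulli_family p S)"
  have "(\<lambda>(b, f). f(x := b)) -` {f. num_true (insert x S) f < u} =
      {True} \<times> {f. num_true S f < u - 1} \<union> {False} \<times> {f. num_true S f < u}"
    using assms by (auto simp: num_true_insert_upd)
  then have "measure_pmf.prob (bernoulli_family p (insert x S)) {f. num_true (insert x S) f < u} =
      measure_pmf.prob ?M ({True} \<times> {f. num_true S f < u - 1} \<union> {False} \<times> {f. num_true S f < u})"
    using assms by (simp add: Pi_pmf_insert)
  also have "\<dots> = measure_pmf.prob ?M ({True} \<times> {f. num_true S f < u - 1}) +
      measure_pmf.prob ?M ({False} \<times> {f. num_true S f < u})"
    by (rule measure_pmf.finite_measure_Union) auto
  finally show ?thesis
    using assms by (simp add: measure_pair_pmf_Times measure_pmf_single)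
qed

lemma prob_num_true_image_less_le:
  assumes "finite X" "inj_on g X"
    and "\<And>x. x \<in> X \<Longrightarrow> 0 \<le> p x \<and> p x \<le> p (g x) \<and> p (g x) \<le> 1"
  shows "measure_pmf.prob (bernoulli_family p (g ` X)) {f. num_true (g ` X) f < u} \<le>
         measure_pmf.prob (bernoulli_family p X) {f. num_true X f < u}"
  using assms
proof (induction X arbitrary: u rule: finite_induct)
  case empty
  then show ?case by simp
next
  case (insert x X)
  have px: "0 \<le> p x" "p x \<le> p (g x)" "p (g x) \<le> 1"
    using insert.prems by auto
  define a where "a = measure_pmf.prob (bernoulli_family p X) {f. num_true X f < u - 1}"
  define b where "b = measure_pmf.prob (bernoulli_family p X) {f. num_true X f < u}"
  define a' where "a' = measure_pmf.prob (bernoulli_family p (g ` X)) {f. num_true (g ` X) f < u - 1}"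
  define b' where "b' = measure_pmf.prob (bernoulli_family p (g ` X)) {f. num_true (g ` X) f < u}"
  have "a' \<le> a" "b' \<le> b"
    unfolding a_def a'_def b_def b'_def using insert by auto
  have "a \<le> b"
    unfolding a_def b_def by (rule measure_pmf.finite_measure_mono) auto
  have "g x \<notin> g ` X"
    using insert by auto
  then have "measure_pmf.prob (bernoulli_family p (g ` insert x X)) {f. num_true (g ` insert x X) f < u}
      = p (g x) * a' + (1 - p (g x)) * b'"
    unfolding a'_def b'_def using px insert.hyps by (simp add: prob_num_true_insert_less)
  also have "\<dots> \<le> p (g x) * a + (1 - p (g x)) * b"
    using \<open>a' \<le> a\<close> \<open>b' \<le> b\<close> px by (intro add_mono mult_left_mono) auto
  also have "\<dots> \<le> p x * a + (1 - p x) * b"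
  proof -
    have "(p (g x) - p x) * (a - b) \<le> 0"
      using px \<open>a \<le> b\<close> by (intro mult_nonneg_nonpos) auto
    then show ?thesis
      by (simp add: algebra_simps)
  qed
  also have "\<dots> = measure_pmf.prob (bernoulli_family p (insert x X)) {f. num_true (insert x X) f < u}"
    unfolding a_def b_def using px insert.hyps by (simp add: prob_num_true_insert_less)
  finally show ?case .
qed

section \<open>Beating disjoint dominating copies\<close>

lemma power_Suc_diff_ge:
  fixes a b :: real
  assumes "0 \<le> a" "a \<le> b"
  shows "real (Suc r) * (b - a) * a ^ r \<le> b ^ Suc r - a ^ Suc r"
proof -
  have pow_le: "a ^ r \<le> a ^ (r - i) * b ^ i" if "i < Suc r" for i
  proof -
    have "a ^ r = a ^ (r - i) * a ^ i"
      using that by (simp flip: power_add)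
    also have "\<dots> \<le> a ^ (r - i) * b ^ i"
      using assms by (intro mult_left_mono power_mono) auto
    finally show ?thesis .
  qed
  have "real (Suc r) * a ^ r = (\<Sum>i<Suc r. a ^ r)"
    by simp
  also have "\<dots> \<le> (\<Sum>i<Suc r. a ^ (Suc r - Suc i) * b ^ i)"
    using pow_le by (intro sum_mono) simp
  finally have "real (Suc r) * a ^ r \<le> (\<Sum>i<Suc r. a ^ (Suc r - Suc i) * b ^ i)" .
  then have "(b - a) * (real (Suc r) * a ^ r) \<le> b ^ Suc r - a ^ Suc r"
    using assms by (simp only: power_diff_sumr2 mult_left_mono)
  then show ?thesis
    by (simp add: mult_ac)
qed

text \<open>For a distribution function \<open>G\<close> of a random variable \<open>U\<close>, the sum is the
  probability that \<open>U\<close> strictly exceeds \<open>r\<close> independent copies of itself, which by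
  symmetry is at most \<open>1 / (r + 1)\<close>.\<close>
lemma sum_increments_mult_power_le:
  fixes G :: "nat \<Rightarrow> real"
  assumes "\<And>u. 0 \<le> G u" "\<And>u. G u \<le> G (Suc u)" "\<And>u. G u \<le> 1"
  shows "(\<Sum>u<N. (G (Suc u) - G u) * G u ^ r) \<le> 1 / real (Suc r)"
proof -
  have "real (Suc r) * (\<Sum>u<N. (G (Suc u) - G u) * G u ^ r) \<le> G N ^ Suc r - G 0 ^ Suc r"
  proof (induction N)
    case 0
    then show ?case by simp
  next
    case (Suc N)
    have "real (Suc r) * (G (Suc N) - G N) * G N ^ r \<le> G (Suc N) ^ Suc r - G N ^ Suc r"
      using assms by (intro power_Suc_diff_ge) auto
    with Suc show ?case
      by (simp add: algebra_simps)
  qed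
  also have "\<dots> \<le> 1"
  proof -
    have "G N ^ Suc r \<le> 1"
      using assms by (intro power_le_one)
    moreover have "0 \<le> G 0 ^ Suc r"
      using assms by simp
    ultimately show ?thesis
      by linarith
  qed
  finally show ?thesis
    by (simp add: field_simps)
qed

lemma disjoint_injections_exist:
  assumes "finite X" "finite Y" "card X * r \<le> card Y"
  obtains h :: "nat \<Rightarrow> 'a \<Rightarrow> 'b" where
    "\<And>i. i < r \<Longrightarrow> inj_on (h i) X" "\<And>i. i < r \<Longrightarrow> h i ` X \<subseteq> Y"
    "\<And>i j. i < r \<Longrightarrow> j < r \<Longrightarrow> i \<noteq> j \<Longrightarrow> h i ` X \<inter> h j ` X = {}"
proof -
  have "card (X \<times> {..<r}) \<le> card Y"
    using assms by (simp add: card_cartesian_product)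
  then obtain e where e: "inj_on e (X \<times> {..<r})" "e ` (X \<times> {..<r}) \<subseteq> Y"
    using card_le_inj[of "X \<times> {..<r}" Y] assms by auto
  show ?thesis
  proof
    show "inj_on (\<lambda>x. e (x, i)) X" if "i < r" for i
      using e(1) that unfolding inj_on_def by auto
    show "(\<lambda>x. e (x, i)) ` X \<subseteq> Y" if "i < r" for i
      using e(2) that by auto
    show "(\<lambda>x. e (x, i)) ` X \<inter> (\<lambda>x. e (x, j)) ` X = {}" if "i < r" "j < r" "i \<noteq> j" for i j
      using e(1) that unfolding inj_on_def by fastforce
  qed
qed

text \<open>Conditioning on the count \<open>u\<close> on \<open>X\<close> makes the copies independent, each of
  them below \<open>u\<close> with probability at most \<open>G u\<close>, the probability that the count on
  \<open>X\<close> itself is below \<open>u\<close>.\<close>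
lemma prob_num_true_exceeds_copies_le:
  fixes h :: "nat \<Rightarrow> 'a \<Rightarrow> 'a"
  assumes "finite S" "X \<subseteq> S"
    and inj: "\<And>i. i < r \<Longrightarrow> inj_on (h i) X"
    and img: "\<And>i. i < r \<Longrightarrow> h i ` X \<subseteq> S - X"
    and disj: "\<And>i j. i < r \<Longrightarrow> j < r \<Longrightarrow> i \<noteq> j \<Longrightarrow> h i ` X \<inter> h j ` X = {}"
    and dom: "\<And>i x. i < r \<Longrightarrow> x \<in> X \<Longrightarrow> p x \<le> p (h i x)"
    and p: "\<And>x. x \<in> S \<Longrightarrow> 0 \<le> p x \<and> p x \<le> 1"
  shows "measure_pmf.prob (bernoulli_family p S)
           {f. \<forall>i<r. num_true (h i ` X) f < num_true X f} \<le> 1 / real (Suc r)"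
proof -
  define R where "R = X \<union> (\<Union>i<r. h i ` X)"
  define G where "G u = measure_pmf.prob (bernoulli_family p X) {f. num_true X f < u}" for u
  have fin: "finite X"
    using assms(1,2) finite_subset by auto
  have G_mono: "G u \<le> G (Suc u)" for u
    unfolding G_def by (rule measure_pmf.finite_measure_mono) auto
  have copies_le: "(\<Prod>i<r. measure_pmf.prob (bernoulli_family p (h i ` X))
      {f. num_true (h i ` X) f < u}) \<le> G u ^ r" for u
  proof -
    have "measure_pmf.prob (bernoulli_family p (h i ` X)) {f. num_true (h i ` X) f < u} \<le> G u"
      if "i < r" for i
      unfolding G_def using fin inj[OF that] dom[OF that] p img[OF that] assms(2)
      by (intro prob_num_true_image_less_le) auto
    then have "(\<Prod>i<r. measure_pmf.prob (bernoulli_family p (h i ` X))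
        {f. num_true (h i ` X) f < u}) \<le> (\<Prod>i<r. G u)"
      by (intro prod_mono) auto
    then show ?thesis
      by simp
  qed
  have "measure_pmf.prob (bernoulli_family p S) {f. \<forall>i<r. num_true (h i ` X) f < num_true X f} =
      measure_pmf.prob (bernoulli_family p R) {f. \<forall>i<r. num_true (h i ` X) f < num_true X f}"
    using assms(1,2) img unfolding R_def
    by (intro prob_Pi_pmf_subset depends_only_on_all depends_only_on_num_true_less) auto
  also have "\<dots> \<le> (\<Sum>u\<le>card X. measure_pmf.prob (bernoulli_family p R)
      {f. num_true X f = u \<and> (\<forall>i<r. num_true (h i ` X) f < u)})"
    using num_true_le_card[OF fin] by (rule measure_pmf_le_sum_values)
  also have "\<dots> = (\<Sum>u\<le>card X. (G (Suc u) - G u) *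
      (\<Prod>i<r. measure_pmf.prob (bernoulli_family p (h i ` X)) {f. num_true (h i ` X) f < u}))"
    unfolding R_def G_def prob_num_true_eq_conv_less[symmetric] using fin img disj
    by (intro sum.cong refl prob_Pi_pmf_conj_all_blocks depends_only_on_num_true) auto
  also have "\<dots> \<le> (\<Sum>u<Suc (card X). (G (Suc u) - G u) * G u ^ r)"
    unfolding lessThan_Suc_atMost using G_mono copies_le by (intro sum_mono mult_left_mono) auto
  also have "\<dots> \<le> 1 / real (Suc r)"
    using G_mono by (intro sum_increments_mult_power_le) (auto simp: G_def)
  finally show ?thesis .
qed

lemma prob_num_true_less_le:
  assumes "finite S" "X \<union> Y \<subseteq> S" "X \<inter> Y = {}"
    and "\<And>x y. x \<in> X \<Longrightarrow> y \<in> Y \<Longrightarrow> p x \<le> p y"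
    and "\<And>x. x \<in> S \<Longrightarrow> 0 \<le> p x \<and> p x \<le> 1"
  shows "measure_pmf.prob (bernoulli_family p S) {f. num_true Y f < num_true X f}
           \<le> 1 / real (Suc (card Y div card X))"
proof -
  define r where "r = card Y div card X"
  have fin: "finite X" "finite Y"
    using assms(1,2) finite_subset by auto
  moreover have "card X * r \<le> card Y"
    unfolding r_def by simp
  ultimately obtain h :: "nat \<Rightarrow> 'a \<Rightarrow> 'a" where h:
    "\<And>i. i < r \<Longrightarrow> inj_on (h i) X" "\<And>i. i < r \<Longrightarrow> h i ` X \<subseteq> Y"
    "\<And>i j. i < r \<Longrightarrow> j < r \<Longrightarrow> i \<noteq> j \<Longrightarrow> h i ` X \<inter> h j ` X = {}"
    by (rule disjoint_injections_exist) blast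
  have "{f. num_true Y f < num_true X f} \<subseteq> {f. \<forall>i<r. num_true (h i ` X) f < num_true X f}"
    using num_true_mono[OF fin(2) h(2)] by (auto intro: le_less_trans)
  then have "measure_pmf.prob (bernoulli_family p S) {f. num_true Y f < num_true X f} \<le>
      measure_pmf.prob (bernoulli_family p S) {f. \<forall>i<r. num_true (h i ` X) f < num_true X f}"
    by (rule measure_pmf.finite_measure_mono) simp
  also have "\<dots> \<le> 1 / real (Suc r)"
  proof (rule prob_num_true_exceeds_copies_le)
    show "h i ` X \<subseteq> S - X" if "i < r" for i
      using h(2)[OF that] assms(2,3) by blast
    show "p x \<le> p (h i x)" if "i < r" "x \<in> X" for i x
      using h(2)[OF that(1)] that(2) by (intro assms(4)) auto
  qed (use assms h in auto)
  finally show ?thesis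
    unfolding r_def .
qed

section \<open>Concentration\<close>

lemma map_Pi_pmf_card_binomial:
  assumes "finite I"
  shows "map_pmf (\<lambda>P. card {j \<in> I. Q (P j)}) (Pi_pmf I d (\<lambda>_. D)) =
         binomial_pmf (card I) (measure_pmf.prob D {x. Q x})"
proof -
  define q where "q = measure_pmf.prob D {x. Q x}"
  have q: "q \<in> {0..1}"
    unfolding q_def by simp
  have "map_pmf Q D = bernoulli_pmf q"
  proof (rule pmf_eqI)
    fix b :: bool
    have "measure_pmf.prob D {x. \<not> Q x} = 1 - q"
      using measure_pmf.prob_compl[of "{x. Q x}" D] unfolding q_def by (simp add: Compl_eq_Diff_UNIV[symmetric] Collect_neg_eq)
    then show "pmf (map_pmf Q D) b = pmf (bernoulli_pmf q) b"
      using q by (cases b) (auto simp: pmf_map vimage_def q_def)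
  qed
  then have Q_coins: "map_pmf (\<lambda>P. Q \<circ> P) (Pi_pmf I d (\<lambda>_. D)) = Pi_pmf I (Q d) (\<lambda>_. bernoulli_pmf q)"
    using Pi_pmf_map[OF assms, of Q d "Q d" "\<lambda>_. D"] by simp
  have "map_pmf (\<lambda>P. card {j \<in> I. Q (P j)}) (Pi_pmf I d (\<lambda>_. D)) =
      map_pmf (\<lambda>f. card {j \<in> I. f j}) (map_pmf (\<lambda>P. Q \<circ> P) (Pi_pmf I d (\<lambda>_. D)))"
    by (simp add: pmf.map_comp o_def)
  also have "\<dots> = map_pmf (\<lambda>f. card {j \<in> I. f j}) (Pi_pmf I (Q d) (\<lambda>_. bernoulli_pmf q))"
    unfolding Q_coins ..
  also have "\<dots> = binomial_pmf (card I) q"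
    using assms q by (intro binomial_pmf_altdef'[symmetric]) auto
  finally show ?thesis
    unfolding q_def .
qed

lemma prob_Pi_pmf_fraction_ge_le:
  assumes "0 < n" "0 \<le> \<epsilon>" "measure_pmf.prob D {x. Q x} + \<epsilon> \<le> a"
  shows "measure_pmf.prob (Pi_pmf {..<n} d (\<lambda>_. D))
           {P. a \<le> real (card {j \<in> {..<n}. Q (P j)}) / real n} \<le> exp (- 2 * real n * \<epsilon>\<^sup>2)"
proof -
  define q where "q = measure_pmf.prob D {x. Q x}"
  have "measure_pmf.prob (Pi_pmf {..<n} d (\<lambda>_. D)) {P. a \<le> real (card {j \<in> {..<n}. Q (P j)}) / real n}
      \<le> measure_pmf.prob (map_pmf (\<lambda>P. card {j \<in> {..<n}. Q (P j)}) (Pi_pmf {..<n} d (\<lambda>_. D)))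
          {x. q + \<epsilon> \<le> real x / real n}"
    using assms(3) unfolding q_def by (auto intro!: measure_pmf.finite_measure_mono)
  also have "\<dots> = measure_pmf.prob (binomial_pmf n q) {x. q + \<epsilon> \<le> real x / real n}"
    using map_Pi_pmf_card_binomial[of "{..<n}" Q d D] unfolding q_def by simp
  also have "\<dots> \<le> exp (- 2 * real n * \<epsilon>\<^sup>2)"
    using binomial_distribution.prob_ge'[of q n \<epsilon>] assms(1,2)
    by (simp add: binomial_distribution_def q_def)
  finally show ?thesis .
qed

lemma sum_exp_decay:
  fixes c :: "'a \<Rightarrow> real"
  assumes "finite I" "\<And>i. i \<in> I \<Longrightarrow> 0 < c i"
  shows "\<exists>c0>0. \<forall>\<^sub>F n in at_top. (\<Sum>i\<in>I. exp (- c i * real n)) \<le> exp (- c0 * real n)"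
proof -
  define d where "d = Min (insert 1 (c ` I))"
  have "0 < d"
    unfolding d_def using assms by (subst Min_gr_iff) auto
  have d_le: "d \<le> c i" if "i \<in> I" for i
    unfolding d_def using assms(1) that by (intro Min_le) auto
  have bound: "(\<Sum>i\<in>I. exp (- c i * real n)) \<le> exp (- (d / 2) * real n)"
    if "real (card I) * 2 / d \<le> real n" for n
  proof -
    have "(\<Sum>i\<in>I. exp (- c i * real n)) \<le> (\<Sum>i\<in>I. exp (- d * real n))"
      using d_le by (intro sum_mono) (simp add: mult_right_mono)
    also have "\<dots> = real (card I) * exp (- d * real n)"
      by simp
    also have "\<dots> \<le> exp (d / 2 * real n) * exp (- d * real n)"
    proof -
      have "real (card I) \<le> d / 2 * real n"
        using that \<open>0 < d\<close> by (simp add: field_simps)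
      also have "\<dots> \<le> exp (d / 2 * real n)"
        using exp_ge_add_one_self[of "d / 2 * real n"] by linarith
      finally show ?thesis
        by (intro mult_right_mono) auto
    qed
    also have "\<dots> = exp (- (d / 2) * real n)"
      by (simp flip: exp_add)
    finally show ?thesis .
  qed
  have "\<forall>\<^sub>F n in at_top. real (card I) * 2 / d \<le> real n"
    using eventually_ge_at_top[of "nat \<lceil>real (card I) * 2 / d\<rceil>"] by eventually_elim linarith
  then have "\<forall>\<^sub>F n in at_top. (\<Sum>i\<in>I. exp (- c i * real n)) \<le> exp (- (d / 2) * real n)"
    by eventually_elim (rule bound)
  then show ?thesis
    using \<open>0 < d\<close> by (intro exI[of _ "d / 2"]) auto
qed

section \<open>Blocking deviations from top-\<open>k\<close> committees\<close>

definition prefer_prob :: "nat \<Rightarrow> (nat \<Rightarrow> real) \<Rightarrow> nat set \<Rightarrow> nat set \<Rightarrow> real" where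
  "prefer_prob m p W W' =
     measure_pmf.prob (approval_pmf m p) {A. card (A \<inter> W) < card (A \<inter> W')}"

definition deviations :: "nat \<Rightarrow> nat \<Rightarrow> nat set set" where
  "deviations m k = {W'. W' \<subseteq> {..<m} \<and> W' \<noteq> {} \<and> card W' \<le> k}"

definition deviation_margin :: "nat \<Rightarrow> nat \<Rightarrow> (nat \<Rightarrow> real) \<Rightarrow> nat set \<times> nat set \<Rightarrow> real" where
  "deviation_margin m k p = (\<lambda>(W, W'). real (card W') / real k - prefer_prob m p W W')"

definition blocking_profiles :: "nat \<Rightarrow> nat \<Rightarrow> nat set \<times> nat set \<Rightarrow> (nat \<Rightarrow> nat set) set" where
  "blocking_profiles n k = (\<lambda>(W, W'). {P. real (card W') / real k \<le>
     real (card {j \<in> {..<n}. card (P j \<inter> W) < card (P j \<inter> W')}) / real n})"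

lemma finite_top_k_Times_deviations: "finite (top_k m k p \<times> deviations m k)"
proof -
  have "top_k m k p \<subseteq> Pow {..<m}" "deviations m k \<subseteq> Pow {..<m}"
    unfolding top_k_def deviations_def by auto
  then show ?thesis
    by (meson finite_Pow_iff finite_SigmaI finite_lessThan finite_subset)
qed

lemma prefer_prob_eq_num_true:
  assumes "W \<subseteq> {..<m}" "W' \<subseteq> {..<m}"
  shows "prefer_prob m p W W' =
    measure_pmf.prob (bernoulli_family p {..<m}) {f. num_true (W - W') f < num_true (W' - W) f}"
proof -
  have approved: "card ({i \<in> {..<m}. f i} \<inter> V) = num_true V f" if "V \<subseteq> {..<m}" for V f
  proof -
    have "{i \<in> {..<m}. f i} \<inter> V = {i \<in> V. f i}"
      using that by auto
    then show ?thesis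
      by (simp add: num_true_def)
  qed
  have fin: "finite W" "finite W'"
    using assms finite_subset by auto
  have "W' \<inter> W = W \<inter> W'"
    by auto
  then have "num_true W f = num_true (W \<inter> W') f + num_true (W - W') f"
       "num_true W' f = num_true (W \<inter> W') f + num_true (W' - W) f" for f
    using fin num_true_Int_Diff by metis+
  then have "(\<lambda>f. {i \<in> {..<m}. f i}) -` {A. card (A \<inter> W) < card (A \<inter> W')} =
      {f. num_true (W - W') f < num_true (W' - W) f}"
    using approved[OF assms(1)] approved[OF assms(2)] by auto
  then show ?thesis
    unfolding prefer_prob_def approval_pmf_def by simp
qed

lemma inverse_Suc_div_less:
  assumes "0 < s" "s \<le> t"
  shows "1 / real (Suc (t div s)) < real s / real t"
proof -
  have "t div s * s + t mod s = t" "t mod s < s" "s * Suc (t div s) = t div s * s + s"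
    using assms(1) by simp_all
  then have "t < s * Suc (t div s)"
    by linarith
  then have "real t < real s * real (Suc (t div s))"
    by (metis of_nat_less_iff of_nat_mult)
  then show ?thesis
    using assms by (simp add: field_simps)
qed

lemma ratio_diff_le:
  assumes "c \<le> w" "w \<le> k" "c < k"
  shows "real (w - c) / real (k - c) \<le> real w / real k"
proof -
  have "real (w - c) * real k \<le> real w * real (k - c)"
    using assms by (simp add: of_nat_diff algebra_simps mult_left_mono)
  then show ?thesis
    using assms by (simp add: field_simps)
qed

lemma prefer_prob_less:
  assumes "0 < k" "W \<in> top_k m k p" "W' \<in> deviations m k"
    and p: "\<And>i. i < m \<Longrightarrow> 0 \<le> p i \<and> p i \<le> 1"
  shows "prefer_prob m p W W' < real (card W') / real k"
proof -
  define X where "X = W' - W"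
  define Y where "Y = W - W'"
  define c where "c = card (W \<inter> W')"
  have W: "W \<subseteq> {..<m}" "card W = k" "\<And>i j. i \<in> W \<Longrightarrow> j \<in> {..<m} - W \<Longrightarrow> p j \<le> p i"
    using assms(2) unfolding top_k_def by auto
  have W': "W' \<subseteq> {..<m}" "W' \<noteq> {}" "card W' \<le> k"
    using assms(3) unfolding deviations_def by auto
  have fin: "finite W" "finite W'"
    using W(1) W'(1) finite_subset by auto
  have "X = W' - (W \<inter> W')" "Y = W - (W \<inter> W')"
    unfolding X_def Y_def by auto
  then have card_X: "card X = card W' - c" and card_Y: "card Y = k - c"
    unfolding c_def using fin W(2) card_Diff_subset[of "W \<inter> W'"] by auto
  have c_le: "c \<le> card W'"
    unfolding c_def using fin by (intro card_mono) auto
  have prefer_eq: "prefer_prob m p W W' =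
      measure_pmf.prob (bernoulli_family p {..<m}) {f. num_true Y f < num_true X f}"
    unfolding X_def Y_def using W(1) W'(1) by (rule prefer_prob_eq_num_true)
  show ?thesis
  proof (cases "X = {}")
    case True
    then have "{f. num_true Y f < num_true X f} = {}"
      by (simp add: num_true_def)
    then show ?thesis
      using prefer_eq fin W'(2) \<open>0 < k\<close> by (simp add: card_gt_0_iff)
  next
    case False
    then have "0 < card X"
      unfolding X_def using fin by (simp add: card_gt_0_iff)
    then have X_le_Y: "card X \<le> card Y" and "c < k"
      using card_X card_Y W'(3) by auto
    have "measure_pmf.prob (bernoulli_family p {..<m}) {f. num_true Y f < num_true X f}
        \<le> 1 / real (Suc (card Y div card X))"
      using W W' p unfolding X_def Y_def by (intro prob_num_true_less_le) auto
    also have "\<dots> < real (card X) / real (card Y)"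
      using \<open>0 < card X\<close> X_le_Y by (rule inverse_Suc_div_less)
    also have "\<dots> \<le> real (card W') / real k"
      unfolding card_X card_Y using c_le W'(3) \<open>c < k\<close> by (rule ratio_diff_le)
    finally show ?thesis
      using prefer_eq by simp
  qed
qed

lemma deviation_margin_pos:
  assumes "0 < k" "x \<in> top_k m k p \<times> deviations m k"
    and "\<And>i. i < m \<Longrightarrow> 0 \<le> p i \<and> p i \<le> 1"
  shows "0 < deviation_margin m k p x"
proof -
  obtain W W' where x: "x = (W, W')" and WW': "W \<in> top_k m k p" "W' \<in> deviations m k"
    using assms(2) by auto
  have "prefer_prob m p W W' < real (card W') / real k"
    using assms(1) WW' assms(3) by (rule prefer_prob_less)
  then show ?thesis
    unfolding deviation_margin_def x by simp
qed

lemma not_in_core_imp_deviation: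
  assumes "0 < n" "0 < k" "W \<subseteq> {..<m}" "card W = k" "\<not> in_core m k n P W"
  obtains W' where "W' \<in> deviations m k"
    and "real (card W') / real k \<le>
         real (card {j \<in> {..<n}. card (P j \<inter> W) < card (P j \<inter> W')}) / real n"
proof -
  from assms(3-5) obtain N' W' where N': "N' \<subseteq> {..<n}" "N' \<noteq> {}" and W': "W' \<subseteq> {..<m}"
    and ratio: "real (card W') / real k \<le> real (card N') / real n"
    and blocking: "\<forall>j\<in>N'. card (P j \<inter> W) < card (P j \<inter> W')"
    unfolding in_core_def by (auto simp: not_le)
  have "W' \<noteq> {}"
    using N'(2) blocking by fastforce
  have "card N' \<le> card {j \<in> {..<n}. card (P j \<inter> W) < card (P j \<inter> W')}"
    using N'(1) blocking by (intro card_mono) auto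
  then have "real (card N') / real n \<le>
      real (card {j \<in> {..<n}. card (P j \<inter> W) < card (P j \<inter> W')}) / real n"
    by (simp add: divide_right_mono)
  with ratio have more: "real (card W') / real k \<le>
      real (card {j \<in> {..<n}. card (P j \<inter> W) < card (P j \<inter> W')}) / real n"
    by linarith
  have "card N' \<le> n"
    using N'(1) card_mono[of "{..<n}" N'] by simp
  then have "real (card N') / real n \<le> 1"
    using assms(1) by simp
  with ratio have "real (card W') / real k \<le> 1"
    by linarith
  then have "card W' \<le> k"
    using assms(2) by (simp add: divide_le_eq)
  with W' \<open>W' \<noteq> {}\<close> more show ?thesis
    by (intro that) (auto simp: deviations_def)
qed

lemma not_all_in_core_subset_blocking:
  assumes "0 < n" "0 < k"
  shows "UNIV - {P. \<forall>W\<in>top_k m k p. in_core m k n P W} \<subseteq>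
    (\<Union>x\<in>top_k m k p \<times> deviations m k. blocking_profiles n k x)"
proof
  fix P assume "P \<in> UNIV - {P. \<forall>W\<in>top_k m k p. in_core m k n P W}"
  then obtain W where W: "W \<in> top_k m k p" "\<not> in_core m k n P W"
    by auto
  then have "W \<subseteq> {..<m}" "card W = k"
    unfolding top_k_def by auto
  then obtain W' where W': "W' \<in> deviations m k" and "real (card W') / real k \<le>
      real (card {j \<in> {..<n}. card (P j \<inter> W) < card (P j \<inter> W')}) / real n"
    using W(2) by (rule not_in_core_imp_deviation[OF assms])
  then have "P \<in> blocking_profiles n k (W, W')"
    unfolding blocking_profiles_def by simp
  with W(1) W' show "P \<in> (\<Union>x\<in>top_k m k p \<times> deviations m k. blocking_profiles n k x)"
    by blast
qed

lemma prob_blocking_profiles_le: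
  assumes "0 < n" "0 < k" "x \<in> top_k m k p \<times> deviations m k"
    and p: "\<And>i. i < m \<Longrightarrow> 0 \<le> p i \<and> p i \<le> 1"
  shows "measure_pmf.prob (profile_pmf n m p) (blocking_profiles n k x) \<le>
         exp (- (2 * (deviation_margin m k p x)\<^sup>2) * real n)"
proof -
  obtain W W' where x: "x = (W, W')"
    by fastforce
  have "0 < deviation_margin m k p x"
    using assms(2,3) p by (rule deviation_margin_pos)
  then have "measure_pmf.prob (profile_pmf n m p) (blocking_profiles n k x) \<le>
      exp (- 2 * real n * (deviation_margin m k p x)\<^sup>2)"
    unfolding x blocking_profiles_def deviation_margin_def profile_pmf_def prefer_prob_def case_prod_conv
    by (intro prob_Pi_pmf_fraction_ge_le assms(1)) auto
  then show ?thesis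
    by (simp add: mult_ac)
qed

lemma prob_not_all_in_core_le:
  assumes "0 < n" "0 < k" and p: "\<And>i. i < m \<Longrightarrow> 0 \<le> p i \<and> p i \<le> 1"
  shows "1 - measure_pmf.prob (profile_pmf n m p) {P. \<forall>W\<in>top_k m k p. in_core m k n P W} \<le>
    (\<Sum>x\<in>top_k m k p \<times> deviations m k. exp (- (2 * (deviation_margin m k p x)\<^sup>2) * real n))"
proof -
  let ?M = "profile_pmf n m p"
  have "1 - measure_pmf.prob ?M {P. \<forall>W\<in>top_k m k p. in_core m k n P W} =
      measure_pmf.prob ?M (UNIV - {P. \<forall>W\<in>top_k m k p. in_core m k n P W})"
    using measure_pmf.prob_compl[of "{P. \<forall>W\<in>top_k m k p. in_core m k n P W}" ?M] by simp
  also have "\<dots> \<le> measure_pmf.prob ?M (\<Union>x\<in>top_k m k p \<times> deviations m k. blocking_profiles n k x)"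
    using not_all_in_core_subset_blocking[OF assms(1,2)] by (rule measure_pmf.finite_measure_mono) simp
  also have "\<dots> \<le> (\<Sum>x\<in>top_k m k p \<times> deviations m k. measure_pmf.prob ?M (blocking_profiles n k x))"
    using finite_top_k_Times_deviations by (rule measure_pmf.finite_measure_subadditive_finite) simp
  also have "\<dots> \<le> (\<Sum>x\<in>top_k m k p \<times> deviations m k.
      exp (- (2 * (deviation_margin m k p x)\<^sup>2) * real n))"
    using assms by (intro sum_mono prob_blocking_profiles_le) auto
  finally show ?thesis .
qed

theorem theorem16:
  fixes m k :: nat and p :: "nat \<Rightarrow> real"
  assumes "0 < k" and "k < m"
    and "\<And>i. i < m \<Longrightarrow> 0 < p i \<and> p i < 1"
  shows "\<exists>c>0. \<forall>\<^sub>F n in at_top.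
           1 - measure_pmf.prob (profile_pmf n m p)
                 {P. \<forall>W\<in>top_k m k p. in_core m k n P W} \<le> exp (- c * real n)"
proof -
  have p: "\<And>i. i < m \<Longrightarrow> 0 \<le> p i \<and> p i \<le> 1"
    using assms(3) by (simp add: less_imp_le)
  have "\<exists>c>0. \<forall>\<^sub>F n in at_top. (\<Sum>x\<in>top_k m k p \<times> deviations m k.
      exp (- (2 * (deviation_margin m k p x)\<^sup>2) * real n)) \<le> exp (- c * real n)"
    using finite_top_k_Times_deviations
  proof (rule sum_exp_decay)
    show "0 < 2 * (deviation_margin m k p x)\<^sup>2" if "x \<in> top_k m k p \<times> deviations m k" for x
      using deviation_margin_pos[OF assms(1) that] p by simp
  qed
  then obtain c where "0 < c" and decay: "\<forall>\<^sub>F n in at_top. (\<Sum>x\<in>top_k m k p \<times> deviations m k.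
      exp (- (2 * (deviation_margin m k p x)\<^sup>2) * real n)) \<le> exp (- c * real n)"
    by blast
  have "\<forall>\<^sub>F n in at_top. 1 - measure_pmf.prob (profile_pmf n m p)
      {P. \<forall>W\<in>top_k m k p. in_core m k n P W} \<le> exp (- c * real n)"
    using decay eventually_gt_at_top[of 0]
    by eventually_elim (rule order_trans[OF prob_not_all_in_core_le], use assms(1) p in auto)
  with \<open>0 < c\<close> show ?thesis
    by blast
qed

end
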